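(* Every $SC^*$-$T_3$ space is an $SC^*$-$T_2$ space.
   Context: For $A\subseteq X$ in a topological space $X$: $A$ is semi-open if $A\subseteq cl(int(A))$, semi-closed if its complement is semi-open; $scl(A)$ is the smallest semi-closed set containing $A$. $A$ is $c^*$-open if $int(cl(A))\subseteq A\subseteq cl(int(A))$. $A$ is $SC^*$-closed if $scl(A)\subseteq U$ whenever $A\subseteq U$ and $U$ is $c^*$-open; $A$ is $SC^*$-open if $X\setminus A$ is $SC^*$-closed. $X$ is $SC^*$-regular if for every closed set $F$ and every point $x\notin F$ there exist disjoint $SC^*$-open sets $U,V$ with $F\subseteq U$ and $x\in V$. $X$ is $SC^*$-$T_1$ if for any distinct $x,y\in X$ there are $SC^*$-open sets $U,V$ with $x\in U$, $y\notin U$, $y\in V$, $x\notin V$. $X$ is $SC^*$-$T_2$ if any two distinct points have disjoint $SC^*$-open neighbourhoods. $X$ is $SC^*$-$T_3$ if it is both $SC^*$-regular and $SC^*$-$T_1$. *)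

theory Defs
  imports "HOL-Analysis.Analysis"
begin

definition semi_open :: "'a topology \<Rightarrow> 'a set \<Rightarrow> bool" where
  "semi_open X A \<longleftrightarrow> A \<subseteq> topspace X \<and> A \<subseteq> X closure_of (X interior_of A)"

definition semi_closed :: "'a topology \<Rightarrow> 'a set \<Rightarrow> bool" where
  "semi_closed X A \<longleftrightarrow> A \<subseteq> topspace X \<and> semi_open X (topspace X - A)"

definition scl :: "'a topology \<Rightarrow> 'a set \<Rightarrow> 'a set" where
  "scl X A = \<Inter> {F. semi_closed X F \<and> A \<subseteq> F}"

definition cstar_open :: "'a topology \<Rightarrow> 'a set \<Rightarrow> bool" where
  "cstar_open X A \<longleftrightarrow> A \<subseteq> topspace X \<and>
     X interior_of (X closure_of A) \<subseteq> A \<and> A \<subseteq> X closure_of (X interior_of A)"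

definition SCstar_closed :: "'a topology \<Rightarrow> 'a set \<Rightarrow> bool" where
  "SCstar_closed X A \<longleftrightarrow> A \<subseteq> topspace X \<and>
     (\<forall>U. A \<subseteq> U \<and> cstar_open X U \<longrightarrow> scl X A \<subseteq> U)"

definition SCstar_open :: "'a topology \<Rightarrow> 'a set \<Rightarrow> bool" where
  "SCstar_open X A \<longleftrightarrow> A \<subseteq> topspace X \<and> SCstar_closed X (topspace X - A)"

definition SCstar_regular :: "'a topology \<Rightarrow> bool" where
  "SCstar_regular X \<longleftrightarrow> (\<forall>F x. closedin X F \<and> x \<in> topspace X \<and> x \<notin> F \<longrightarrow>
     (\<exists>U V. SCstar_open X U \<and> SCstar_open X V \<and> U \<inter> V = {} \<and> F \<subseteq> U \<and> x \<in> V))"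

definition SCstar_T1 :: "'a topology \<Rightarrow> bool" where
  "SCstar_T1 X \<longleftrightarrow> (\<forall>x\<in>topspace X. \<forall>y\<in>topspace X. x \<noteq> y \<longrightarrow>
     (\<exists>U V. SCstar_open X U \<and> SCstar_open X V \<and> x \<in> U \<and> y \<notin> U \<and> y \<in> V \<and> x \<notin> V))"

definition SCstar_T2 :: "'a topology \<Rightarrow> bool" where
  "SCstar_T2 X \<longleftrightarrow> (\<forall>x\<in>topspace X. \<forall>y\<in>topspace X. x \<noteq> y \<longrightarrow>
     (\<exists>U V. SCstar_open X U \<and> SCstar_open X V \<and> x \<in> U \<and> y \<in> V \<and> U \<inter> V = {}))"

definition SCstar_T3 :: "'a topology \<Rightarrow> bool" where
  "SCstar_T3 X \<longleftrightarrow> SCstar_regular X \<and> SCstar_T1 X"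

end

theory Submission
  imports Defs
begin

text \<open>Given distinct points x and y, if x is not in the closure of {y}, SC*-regularity separates
  the closed set X closure_of {y} from x, and symmetrically with x and y exchanged. Otherwise
  neither {x} nor {y} is open. A non-open singleton {x} is SC*-open: a c*-open superset U of its
  complement is dense, so U contains the interior of its closure, which is the whole space.\<close>

lemma scl_subset_topspace: "A \<subseteq> topspace X \<Longrightarrow> scl X A \<subseteq> topspace X"
proof -
  assume "A \<subseteq> topspace X"
  moreover have "semi_closed X (topspace X)"
    by (simp add: semi_closed_def semi_open_def)
  ultimately show ?thesis
    unfolding scl_def by blast
qed

lemma cstar_open_dense_eq_topspace:
  assumes "cstar_open X U" and "X closure_of U = topspace X"
  shows "U = topspace X"
proof -
  have "X interior_of (X closure_of U) \<subseteq> U"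
    using assms(1) unfolding cstar_open_def by blast
  moreover have "U \<subseteq> topspace X"
    using assms(1) unfolding cstar_open_def by blast
  ultimately show ?thesis
    using assms(2) by simp
qed

lemma SCstar_closedI_no_proper_cstar_superset:
  assumes "U \<subseteq> topspace X" and "\<And>V. U \<subseteq> V \<Longrightarrow> cstar_open X V \<Longrightarrow> V = topspace X"
  shows "SCstar_closed X U"
  unfolding SCstar_closed_def
proof (intro conjI allI impI)
  fix V
  assume "U \<subseteq> V \<and> cstar_open X V"
  then have "V = topspace X"
    using assms(2) by blast
  then show "scl X U \<subseteq> V"
    using scl_subset_topspace[OF assms(1)] by simp
qed (fact assms(1))

lemma SCstar_open_singleton:
  assumes x: "x \<in> topspace X" and not_open: "\<not> openin X {x}"
  shows "SCstar_open X {x}"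
proof -
  have "X interior_of {x} = {}"
    unfolding interior_of_eq_empty
  proof (intro allI impI)
    fix T
    assume "openin X T \<and> T \<subseteq> {x}"
    with not_open show "T = {}"
      by (metis subset_singleton_iff)
  qed
  then have dense: "X closure_of (topspace X - {x}) = topspace X"
    by (simp add: closure_of_complement)
  have "V = topspace X" if sub: "topspace X - {x} \<subseteq> V" and V: "cstar_open X V" for V
  proof (rule cstar_open_dense_eq_topspace[OF V])
    show "X closure_of V = topspace X"
      using closure_of_mono[OF sub] closure_of_subset_topspace[of X V] dense by blast
  qed
  then have "SCstar_closed X (topspace X - {x})"
    by (intro SCstar_closedI_no_proper_cstar_superset) auto
  with x show ?thesis
    unfolding SCstar_open_def by simp
qed

lemma not_openin_singleton_in_closure:
  assumes "x \<in> X closure_of {y}" and "x \<noteq> y"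
  shows "\<not> openin X {x}"
proof
  assume "openin X {x}"
  then have "{y} \<inter> {x} \<noteq> {}"
    using assms(1) unfolding in_closure_of by blast
  with assms(2) show False
    by simp
qed

lemma SCstar_regular_separate_points:
  assumes R: "SCstar_regular X" and x: "x \<in> topspace X" and y: "y \<in> topspace X"
    and x_notin: "x \<notin> X closure_of {y}"
  obtains U V where "SCstar_open X U" "SCstar_open X V" "x \<in> U" "y \<in> V" "U \<inter> V = {}"
proof -
  obtain V U where "SCstar_open X V" "SCstar_open X U" "V \<inter> U = {}"
    and cl_sub: "X closure_of {y} \<subseteq> V" and "x \<in> U"
    using R x x_notin unfolding SCstar_regular_def by (meson closedin_closure_of)
  moreover have "y \<in> V"
    using cl_sub y closure_of_subset[of "{y}" X] by auto
  ultimately show ?thesis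
    using that by blast
qed

theorem theorem2p13:
  fixes X :: "'a topology"
  assumes "SCstar_T3 X"
  shows "SCstar_T2 X"
  unfolding SCstar_T2_def
proof (intro ballI impI)
  have R: "SCstar_regular X"
    using assms unfolding SCstar_T3_def by simp
  fix x y
  assume x: "x \<in> topspace X" and y: "y \<in> topspace X" and "x \<noteq> y"
  consider "x \<notin> X closure_of {y}" | "y \<notin> X closure_of {x}"
    | "x \<in> X closure_of {y}" "y \<in> X closure_of {x}"
    by blast
  then show "\<exists>U V. SCstar_open X U \<and> SCstar_open X V \<and> x \<in> U \<and> y \<in> V \<and> U \<inter> V = {}"
  proof cases
    case 1
    with R x y obtain U V
      where "SCstar_open X U" "SCstar_open X V" "x \<in> U" "y \<in> V" "U \<inter> V = {}"
      by (rule SCstar_regular_separate_points)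
    then show ?thesis
      by blast
  next
    case 2
    with R y x obtain V U
      where "SCstar_open X V" "SCstar_open X U" "y \<in> V" "x \<in> U" "V \<inter> U = {}"
      by (rule SCstar_regular_separate_points)
    then show ?thesis
      by blast
  next
    case 3
    with \<open>x \<noteq> y\<close> have "\<not> openin X {x}" "\<not> openin X {y}"
      by (auto dest: not_openin_singleton_in_closure)
    with x y have "SCstar_open X {x}" "SCstar_open X {y}"
      by (auto intro: SCstar_open_singleton)
    with \<open>x \<noteq> y\<close> show ?thesis
      by blast
  qed
qed

end
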